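(* Let $P=\frac{1}{\sqrt2}\begin{bmatrix}1&1\\0&0\end{bmatrix}$, $Q=\frac{1}{\sqrt2}\begin{bmatrix}0&0\\1&-1\end{bmatrix}$, $R=\sqrt2\,PQ=\frac{1}{\sqrt2}\begin{bmatrix}1&-1\\0&0\end{bmatrix}$, $S=\sqrt2\,QP=\frac{1}{\sqrt2}\begin{bmatrix}0&0\\1&1\end{bmatrix}$. For integers $l,m\ge0$ with $l+m=n\ge1$, let $\Xi(l,m)$ denote the sum of all distinct products $A_1A_2\cdots A_n$ with each $A_j\in\{P,Q\}$, exactly $l$ of them equal to $P$ and exactly $m$ equal to $Q$ (so $\binom{n}{l}$ terms). Then: (i) if $\min\{l,m\}\ge1$, $$\Xi(l,m)=\Big(\tfrac{1}{\sqrt2}\Big)^{n-1}(-1)^m\sum_{\gamma=1}^{\min\{l,m\}}(-1)^\gamma\binom{l-1}{\gamma-1}\binom{m-1}{\gamma-1}\Big[\tfrac{l-\gamma}{\gamma}P-\tfrac{m-\gamma}{\gamma}Q+R+S\Big];$$ (ii) if $l=n\ge1$ and $m=0$, $\Xi(l,0)=\big(\tfrac{1}{\sqrt2}\big)^{l-1}P$; (iii) if $l=0$ and $m=n\ge1$, $\Xi(0,m)=\big(\tfrac{1}{\sqrt2}\big)^{m-1}(-1)^{m+1}Q$.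
   Context: $P$ and $Q$ are the two parts of the Hadamard matrix $H=\frac{1}{\sqrt2}\begin{bmatrix}1&1\\1&-1\end{bmatrix}=P+Q$ governing the one-dimensional Hadamard walk, and $\Xi(l,m)$ is the coefficient of the word-sum appearing in the expansion of $H^n=(P+Q)^n$ (a "quantum Pascal's triangle"). *)

theory Defs
  imports "HOL-Analysis.Analysis"
begin

definition matP :: "real^2^2" where
  "matP = (1 / sqrt 2) *\<^sub>R vector [vector [1, 1], vector [0, 0]]"

definition matQ :: "real^2^2" where
  "matQ = (1 / sqrt 2) *\<^sub>R vector [vector [0, 0], vector [1, -1]]"

definition matR :: "real^2^2" where
  "matR = sqrt 2 *\<^sub>R (matP ** matQ)"

definition matS :: "real^2^2" where
  "matS = sqrt 2 *\<^sub>R (matQ ** matP)"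

definition word_prod :: "bool list \<Rightarrow> real^2^2" where
  "word_prod w = foldr (\<lambda>b A. (if b then matP else matQ) ** A) w (mat 1)"

definition Xi :: "nat \<Rightarrow> nat \<Rightarrow> real^2^2" where
  "Xi l m = (\<Sum>w\<in>{w. length w = l + m \<and> length (filter id w) = l}. word_prod w)"

end

theory Submission
  imports Defs
begin

(*
  Sorting the words by their first letter gives the recursion
  Xi(l+1, m+1) = P Xi(l, m+1) + Q Xi(l+1, m), while Xi(l, 0) and Xi(0, m) are
  powers of P and Q.  Left multiplication by P or Q maps the span of P, Q, R, S
  into itself, so the closed form can be checked by induction on l + m,
  coefficient by coefficient.  The coefficients are alternating sums of
  products of two binomial coefficients, and the recursions they must satisfy
  are instances of Pascal's rule.
*)

lemma matrix_mult_sum_right: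
  fixes A :: "'a::comm_semiring_1^'n^'m"
  shows "A ** sum f S = (\<Sum>x\<in>S. A ** f x)"
  by (simp add: vec_eq_iff matrix_matrix_mult_def sum_component sum_distrib_left)
    (intro allI sum.swap)

lemma matrix_mult_scaleR_right:
  fixes A :: "'a::real_algebra_1^'n^'m"
  shows "A ** (k *\<^sub>R B) = k *\<^sub>R (A ** B)"
  by (simp add: matrix_scalar_ac scalar_matrix_assoc)

lemma mat2_eq_iff:
  "(A::real^2^2) = B \<longleftrightarrow> A$1$1 = B$1$1 \<and> A$1$2 = B$1$2 \<and> A$2$1 = B$2$1 \<and> A$2$2 = B$2$2"
  by (auto simp: vec_eq_iff forall_2)

lemma matrix_mult_nth_2: "((A::real^2^2) ** B)$i$j = A$i$1 * B$1$j + A$i$2 * B$2$j"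
  by (simp add: matrix_matrix_mult_def sum_2)

lemma matR_eq: "matR = (1 / sqrt 2) *\<^sub>R vector [vector [1, -1], vector [0, 0]]"
  by (simp add: mat2_eq_iff matrix_mult_nth_2 matR_def matP_def matQ_def field_simps)

lemma matS_eq: "matS = (1 / sqrt 2) *\<^sub>R vector [vector [0, 0], vector [1, 1]]"
  by (simp add: mat2_eq_iff matrix_mult_nth_2 matS_def matP_def matQ_def field_simps)

lemma matP_mult_comb:
  "matP ** (a *\<^sub>R matP + b *\<^sub>R matQ + c *\<^sub>R matR + d *\<^sub>R matS)
     = (1 / sqrt 2) *\<^sub>R ((a + d) *\<^sub>R matP + (b + c) *\<^sub>R matR)"
  by (simp add: mat2_eq_iff matrix_mult_nth_2 matR_eq matS_eq matP_def matQ_def field_simps)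

lemma matQ_mult_comb:
  "matQ ** (a *\<^sub>R matP + b *\<^sub>R matQ + c *\<^sub>R matR + d *\<^sub>R matS)
     = (1 / sqrt 2) *\<^sub>R ((c - b) *\<^sub>R matQ + (a - d) *\<^sub>R matS)"
  by (simp add: mat2_eq_iff matrix_mult_nth_2 matR_eq matS_eq matP_def matQ_def field_simps)

lemma matP_mult_matP: "matP ** matP = (1 / sqrt 2) *\<^sub>R matP"
  using matP_mult_comb[of 1 0 0 0] by simp

lemma matP_mult_matQ: "matP ** matQ = (1 / sqrt 2) *\<^sub>R matR"
  using matP_mult_comb[of 0 1 0 0] by simp

lemma matQ_mult_matP: "matQ ** matP = (1 / sqrt 2) *\<^sub>R matS"
  using matQ_mult_comb[of 1 0 0 0] by simp

lemma matQ_mult_matQ: "matQ ** matQ = - ((1 / sqrt 2) *\<^sub>R matQ)"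
  using matQ_mult_comb[of 0 1 0 0] by simp

definition words :: "nat \<Rightarrow> nat \<Rightarrow> bool list set" where
  "words l m = {w. length w = l + m \<and> length (filter id w) = l}"

lemma Xi_eq_sum_words: "Xi l m = (\<Sum>w\<in>words l m. word_prod w)"
  by (simp add: Xi_def words_def)

lemma finite_words: "finite (words l m)"
proof (rule finite_subset)
  show "words l m \<subseteq> {w. set w \<subseteq> UNIV \<and> length w = l + m}"
    by (auto simp: words_def)
qed (use finite_lists_length_eq[of "UNIV :: bool set"] in simp)

lemma words_Suc_Suc:
  "words (Suc l) (Suc m) = Cons True ` words l (Suc m) \<union> Cons False ` words (Suc l) m"
proof (rule set_eqI)
  fix w
  show "w \<in> words (Suc l) (Suc m) \<longleftrightarrow>
        w \<in> Cons True ` words l (Suc m) \<union> Cons False ` words (Suc l) m"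
    by (cases w) (auto simp: words_def)
qed

lemma words_0_right: "words l 0 = {replicate l True}"
proof -
  have "w = replicate l True" if "length w = l" "length (filter id w) = l" for w
  proof (rule replicate_eqI)
    fix x assume "x \<in> set w"
    then show "x = True"
      using length_filter_less[of x w id] that by auto
  qed (use that in simp)
  then show ?thesis
    by (auto simp: words_def)
qed

lemma words_0_left: "words 0 m = {replicate m False}"
proof -
  have "w = replicate m False" if "length w = m" "length (filter id w) = 0" for w
  proof (rule replicate_eqI)
    fix x assume "x \<in> set w"
    then show "x = False"
      using that by (auto simp: filter_empty_conv)
  qed (use that in simp)
  then show ?thesis
    by (auto simp: words_def)
qed

lemma word_prod_Nil: "word_prod [] = mat 1"
  by (simp add: word_prod_def)

lemma word_prod_Cons: "word_prod (b # w) = (if b then matP else matQ) ** word_prod w"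
  by (simp add: word_prod_def)

lemma word_prod_replicate_True: "word_prod (replicate (Suc n) True) = (1 / sqrt 2) ^ n *\<^sub>R matP"
  by (induction n)
    (simp_all add: word_prod_Nil word_prod_Cons matrix_mult_scaleR_right matP_mult_matP)

lemma word_prod_replicate_False:
  "word_prod (replicate (Suc n) False) = ((1 / sqrt 2) ^ n * (-1) ^ n) *\<^sub>R matQ"
  by (induction n)
    (simp_all add: word_prod_Nil word_prod_Cons matrix_mult_scaleR_right matQ_mult_matQ)

lemma Xi_Suc_Suc: "Xi (Suc l) (Suc m) = matP ** Xi l (Suc m) + matQ ** Xi (Suc l) m"
  unfolding Xi_eq_sum_words words_Suc_Suc
  by (subst sum.union_disjoint)
    (auto simp: finite_words sum.reindex word_prod_Cons matrix_mult_sum_right)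

lemma Xi_0_right: "Xi (Suc n) 0 = (1 / sqrt 2) ^ n *\<^sub>R matP"
  by (simp add: Xi_eq_sum_words words_0_right word_prod_replicate_True del: replicate_Suc)

lemma Xi_0_left: "Xi 0 (Suc n) = ((1 / sqrt 2) ^ n * (-1) ^ n) *\<^sub>R matQ"
  by (simp add: Xi_eq_sum_words words_0_left word_prod_replicate_False del: replicate_Suc)

definition alt_choose_sum :: "nat \<Rightarrow> nat \<Rightarrow> nat \<Rightarrow> nat \<Rightarrow> real" where
  "alt_choose_sum a b L M =
     (\<Sum>k\<le>min L M. (-1) ^ k * real (L choose (k + a)) * real (M choose (k + b)))"

lemma alt_choose_sum_extend:
  assumes "min L M \<le> N"
  shows "alt_choose_sum a b L M =
           (\<Sum>k\<le>N. (-1) ^ k * real (L choose (k + a)) * real (M choose (k + b)))"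
  unfolding alt_choose_sum_def using assms by (intro sum.mono_neutral_left) auto

lemma alt_choose_sum_commute: "alt_choose_sum a b L M = alt_choose_sum b a M L"
  by (simp add: alt_choose_sum_def min.commute mult_ac)

lemma alt_choose_sum_0_left: "alt_choose_sum a b 0 M = (if a = 0 then real (M choose b) else 0)"
  by (simp add: alt_choose_sum_def)

lemma alt_choose_sum_0_right: "alt_choose_sum a b L 0 = (if b = 0 then real (L choose a) else 0)"
  by (simp add: alt_choose_sum_def)

lemma alt_choose_sum_Suc_Suc_left:
  "alt_choose_sum (Suc a) b (Suc L) M = alt_choose_sum (Suc a) b L M + alt_choose_sum a b L M"
  by (simp add: alt_choose_sum_extend[of _ _ M] sum.distrib[symmetric] algebra_simps)

lemma alt_choose_sum_split_first:
  "alt_choose_sum 0 b L M =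
     real (M choose b)
     + (\<Sum>k\<le>M. (-1) ^ Suc k * real (L choose Suc k) * real (M choose Suc (k + b)))"
proof -
  have "alt_choose_sum 0 b L M =
      (\<Sum>k\<le>Suc M. (-1) ^ k * real (L choose (k + 0)) * real (M choose (k + b)))"
    by (rule alt_choose_sum_extend) simp
  then show ?thesis
    by (simp only: sum.atMost_Suc_shift) simp
qed

lemma alt_choose_sum_Suc_left:
  "alt_choose_sum 0 b (Suc L) M = alt_choose_sum 0 b L M - alt_choose_sum 0 (Suc b) L M"
  unfolding alt_choose_sum_split_first[of b]
    alt_choose_sum_extend[of L M M 0 "Suc b", OF min.cobounded2]
  by (simp add: sum.distrib[symmetric] sum_subtractf[symmetric] algebra_simps)

lemma alt_choose_sum_Suc_Suc_right:
  "alt_choose_sum a (Suc b) L (Suc M) = alt_choose_sum a (Suc b) L M + alt_choose_sum a b L M"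
  unfolding alt_choose_sum_commute[of a "Suc b" L] alt_choose_sum_commute[of a b L]
  by (rule alt_choose_sum_Suc_Suc_left)

lemma alt_choose_sum_Suc_right:
  "alt_choose_sum a 0 L (Suc M) = alt_choose_sum a 0 L M - alt_choose_sum (Suc a) 0 L M"
  unfolding alt_choose_sum_commute[of a 0 L] alt_choose_sum_commute[of "Suc a" 0 L]
  by (rule alt_choose_sum_Suc_left)

lemma real_choose_Suc_right:
  "real (n choose Suc k) = real (n choose k) * (real (n - k) / real (Suc k))"
proof -
  have "Suc k * (n choose Suc k) = (n - k) * (n choose k)"
    by (simp only: binomial_absorption binomial_absorb_comp)
  then have "real (Suc k) * real (n choose Suc k) = real (n - k) * real (n choose k)"
    by (simp only: of_nat_mult[symmetric])
  then show ?thesis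
    by (simp add: field_simps del: of_nat_Suc)
qed

lemma gamma_sum_eq_alt_choose_sums:
  fixes A B C D :: "'a::real_vector"
  shows "(\<Sum>\<gamma> = 1..min (Suc L) (Suc M).
            ((-1) ^ \<gamma> * real (L choose (\<gamma> - 1)) * real (M choose (\<gamma> - 1))) *\<^sub>R
            ((real (Suc L - \<gamma>) / real \<gamma>) *\<^sub>R A - (real (Suc M - \<gamma>) / real \<gamma>) *\<^sub>R B + C + D))
       = - (alt_choose_sum 1 0 L M *\<^sub>R A - alt_choose_sum 0 1 L M *\<^sub>R B
            + alt_choose_sum 0 0 L M *\<^sub>R (C + D))"
proof -
  let ?t = "\<lambda>k. (-1) ^ k * real (L choose k) * real (M choose k)"
  have "(\<Sum>\<gamma> = 1..min (Suc L) (Suc M).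
            ((-1) ^ \<gamma> * real (L choose (\<gamma> - 1)) * real (M choose (\<gamma> - 1))) *\<^sub>R
            ((real (Suc L - \<gamma>) / real \<gamma>) *\<^sub>R A - (real (Suc M - \<gamma>) / real \<gamma>) *\<^sub>R B + C + D))
      = (\<Sum>k\<le>min L M. (- ?t k) *\<^sub>R
            ((real (L - k) / real (Suc k)) *\<^sub>R A - (real (M - k) / real (Suc k)) *\<^sub>R B + C + D))"
    unfolding min_Suc_Suc One_nat_def sum.atLeast1_atMost_eq lessThan_Suc_atMost by simp
  also have "\<dots> = (\<Sum>k\<le>min L M. - (((-1) ^ k * real (L choose Suc k) * real (M choose k)) *\<^sub>R A
            - ((-1) ^ k * real (L choose k) * real (M choose Suc k)) *\<^sub>R B + ?t k *\<^sub>R (C + D)))"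
    by (simp add: real_choose_Suc_right[of L] real_choose_Suc_right[of M] algebra_simps
        del: of_nat_Suc)
  also have "\<dots> = - (alt_choose_sum 1 0 L M *\<^sub>R A - alt_choose_sum 0 1 L M *\<^sub>R B
            + alt_choose_sum 0 0 L M *\<^sub>R (C + D))"
    by (simp add: alt_choose_sum_def sum.distrib sum_subtractf sum_negf scaleR_sum_left)
  finally show ?thesis .
qed

definition Xi_closed :: "nat \<Rightarrow> nat \<Rightarrow> real^2^2" where
  "Xi_closed L M = ((1 / sqrt 2) ^ (L + M + 1) * (-1) ^ M) *\<^sub>R
     (alt_choose_sum 1 0 L M *\<^sub>R matP + (- alt_choose_sum 0 1 L M) *\<^sub>R matQ
      + alt_choose_sum 0 0 L M *\<^sub>R matR + alt_choose_sum 0 0 L M *\<^sub>R matS)"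

lemma matP_mult_Xi_closed:
  "matP ** Xi_closed L M = ((1 / sqrt 2) ^ (L + M + 2) * (-1) ^ M) *\<^sub>R
     (alt_choose_sum 1 0 (Suc L) M *\<^sub>R matP + alt_choose_sum 0 0 (Suc L) M *\<^sub>R matR)"
  unfolding Xi_closed_def matrix_mult_scaleR_right matP_mult_comb
  by (simp add: alt_choose_sum_Suc_Suc_left alt_choose_sum_Suc_left algebra_simps)

lemma matQ_mult_Xi_closed:
  "matQ ** Xi_closed L M = ((1 / sqrt 2) ^ (L + M + 2) * (-1) ^ Suc M) *\<^sub>R
     ((- alt_choose_sum 0 1 L (Suc M)) *\<^sub>R matQ + alt_choose_sum 0 0 L (Suc M) *\<^sub>R matS)"
  unfolding Xi_closed_def matrix_mult_scaleR_right matQ_mult_comb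
  by (simp add: alt_choose_sum_Suc_Suc_right alt_choose_sum_Suc_right algebra_simps)

lemma Xi_Suc_Suc_eq_Xi_closed: "Xi (Suc L) (Suc M) = Xi_closed L M"
proof (induction "L + M" arbitrary: L M rule: less_induct)
  case less
  let ?c = "(1 / sqrt 2) ^ (L + M + 1) * (-1) ^ M"
  have first_P: "matP ** Xi L (Suc M) =
      ?c *\<^sub>R (alt_choose_sum 1 0 L M *\<^sub>R matP + alt_choose_sum 0 0 L M *\<^sub>R matR)"
  proof (cases L)
    case 0
    then show ?thesis
      by (simp add: Xi_0_left matrix_mult_scaleR_right matP_mult_matQ
          alt_choose_sum_0_left)
  next
    case (Suc L')
    then show ?thesis
      using less[of L' M] by (simp add: matP_mult_Xi_closed)
  qed
  have first_Q: "matQ ** Xi (Suc L) M =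
      ?c *\<^sub>R ((- alt_choose_sum 0 1 L M) *\<^sub>R matQ + alt_choose_sum 0 0 L M *\<^sub>R matS)"
  proof (cases M)
    case 0
    then show ?thesis
      by (simp add: Xi_0_right matrix_mult_scaleR_right matQ_mult_matP
          alt_choose_sum_0_right)
  next
    case (Suc M')
    then show ?thesis
      using less[of L M'] by (simp add: matQ_mult_Xi_closed)
  qed
  show ?case
    unfolding Xi_Suc_Suc first_P first_Q Xi_closed_def by (simp add: algebra_simps)
qed

lemma Xi_eq_gamma_sum:
  assumes "min l m \<ge> 1"
  shows "Xi l m = ((1 / sqrt 2) ^ (l + m - 1) * (-1) ^ m) *\<^sub>R
           (\<Sum>\<gamma> = 1..min l m. ((-1) ^ \<gamma> * real ((l - 1) choose (\<gamma> - 1))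
                 * real ((m - 1) choose (\<gamma> - 1))) *\<^sub>R
              ((real (l - \<gamma>) / real \<gamma>) *\<^sub>R matP - (real (m - \<gamma>) / real \<gamma>) *\<^sub>R matQ
               + matR + matS))"
proof -
  obtain L M where l: "l = Suc L" and m: "m = Suc M"
    using assms by (cases l; cases m) auto
  have "Xi l m = ((1 / sqrt 2) ^ (L + M + 1) * (-1) ^ Suc M) *\<^sub>R
      - (alt_choose_sum 1 0 L M *\<^sub>R matP - alt_choose_sum 0 1 L M *\<^sub>R matQ
         + alt_choose_sum 0 0 L M *\<^sub>R (matR + matS))"
    by (simp add: l m Xi_Suc_Suc_eq_Xi_closed Xi_closed_def algebra_simps)
  then show ?thesis
    by (simp only: l m add_Suc diff_Suc_1 gamma_sum_eq_alt_choose_sums) simp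
qed

theorem theorem3:
  fixes l m :: nat
  assumes "l + m \<ge> 1"
  shows "(min l m \<ge> 1 \<longrightarrow>
           Xi l m = ((1 / sqrt 2) ^ (l + m - 1) * (-1) ^ m) *\<^sub>R
             (\<Sum>\<gamma> = 1..min l m. ((-1) ^ \<gamma> * real ((l - 1) choose (\<gamma> - 1))
                   * real ((m - 1) choose (\<gamma> - 1))) *\<^sub>R
                ((real (l - \<gamma>) / real \<gamma>) *\<^sub>R matP - (real (m - \<gamma>) / real \<gamma>) *\<^sub>R matQ
                 + matR + matS)))
       \<and> (m = 0 \<longrightarrow> Xi l 0 = (1 / sqrt 2) ^ (l - 1) *\<^sub>R matP)
       \<and> (l = 0 \<longrightarrow> Xi 0 m = ((1 / sqrt 2) ^ (m - 1) * (-1) ^ (m + 1)) *\<^sub>R matQ)"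
  using assms Xi_eq_gamma_sum[of l m]
  by (cases l; cases m) (simp_all add: Xi_0_right Xi_0_left)

end
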